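(* Let $n\ge 2$, let $S=\{p_1,\dots,p_n\}$ be a set of $n$ point sites in $\mathbb{R}^d$, and let $\{d_{p_i}\}_{1\le i\le n}$ be an admissible system of distance functions. Let $C\subset\mathbb{R}^d$ be a bounded open set, and let $\lambda_1,\dots,\lambda_n>0$ be real numbers with $\lambda_1+\dots+\lambda_n=\mu(C)$. Then there exists a weight vector $w=(w_1,\dots,w_n)\in\mathbb{R}^n$ such that $\mu\bigl(C\cap \mathrm{VR}_w(p_i,S)\bigr)=\lambda_i$ for all $1\le i\le n$. If, moreover, $C$ is path-connected, then such a $w$ is unique up to adding the same constant to all $w_i$, and consequently the parts $C_i=C\cap\mathrm{VR}_w(p_i,S)$ are uniquely determined.
   Context: $\mu$ is a measure defined on all Lebesgue-measurable subsets of $\mathbb{R}^d$ such that $\mu$ and $d$-dimensional Lebesgue measure are mutually absolutely continuous. Each site $p\in S$ has a continuous function $d_p:\mathbb{R}^d\to\mathbb{R}_{\ge 0}$. For $p\neq q\in S$ and $\gamma\in\mathbb{R}$ let $R_\gamma(p,q)=\{z\in\mathbb{R}^d : d_p(z)-d_q(z)<\gamma\}$. The system $\{d_p\}_{p\in S}$ is called admissible if for all $p\neq q\in S$ and every bounded open set $C\subset\mathbb{R}^d$ there exist real numbers $m_{pq}<M_{pq}$ such that the function $\gamma\mapsto\mu(C\cap R_\gamma(p,q))$ is continuous on $\mathbb{R}$ and increases (monotonically) from $0$ to $\mu(C)$ as $\gamma$ grows from $m_{pq}$ to $M_{pq}$; moreover $C\cap R_\gamma(p,q)=\emptyset$ for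 $\gamma\le m_{pq}$ and $C\subset R_\gamma(p,q)$ for $\gamma\ge M_{pq}$. For a weight vector $w=(w_1,\dots,w_n)$, the additively weighted Voronoi region of $p_i$ is $\mathrm{VR}_w(p_i,S)=\bigcap_{j\neq i}R_{w_i-w_j}(p_i,p_j)$, i.e. the set of points $z$ with $d_{p_i}(z)-w_i<d_{p_j}(z)-w_j$ for all $j\ne i$. *)

theory Defs
  imports "HOL-Analysis.Analysis"
begin

definition mutually_ac_lebesgue :: "'a::euclidean_space measure \<Rightarrow> bool" where
  "mutually_ac_lebesgue M \<longleftrightarrow>
     sets M = sets lebesgue \<and> null_sets M = null_sets lebesgue"

definition Rgam :: "('a \<Rightarrow> 'b \<Rightarrow> real) \<Rightarrow> 'a \<Rightarrow> 'a \<Rightarrow> real \<Rightarrow> 'b set" where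
  "Rgam D p q \<gamma> = {z. D p z - D q z < \<gamma>}"

definition admissible ::
  "'a::euclidean_space measure \<Rightarrow> ('b \<Rightarrow> 'a \<Rightarrow> real) \<Rightarrow> 'b set \<Rightarrow> bool" where
  "admissible M D S \<longleftrightarrow>
     (\<forall>p\<in>S. continuous_on UNIV (D p) \<and> (\<forall>z. 0 \<le> D p z)) \<and>
     (\<forall>p\<in>S. \<forall>q\<in>S. p \<noteq> q \<longrightarrow>
        (\<forall>C. bounded C \<and> open C \<longrightarrow>
          (\<exists>m Mx. m < Mx \<and>
             continuous_on UNIV (\<lambda>\<gamma>. emeasure M (C \<inter> Rgam D p q \<gamma>)) \<and>
             mono_on {m..Mx} (\<lambda>\<gamma>. emeasure M (C \<inter> Rgam D p q \<gamma>)) \<and>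
             (\<forall>\<gamma>\<le>m. C \<inter> Rgam D p q \<gamma> = {}) \<and>
             (\<forall>\<gamma>\<ge>Mx. C \<subseteq> Rgam D p q \<gamma>))))"

definition VR :: "('b \<Rightarrow> 'a \<Rightarrow> real) \<Rightarrow> (nat \<Rightarrow> 'b) \<Rightarrow> nat \<Rightarrow> (nat \<Rightarrow> real) \<Rightarrow> nat \<Rightarrow> 'a set" where
  "VR D p n w i = (\<Inter>j\<in>{..<n} - {i}. Rgam D (p i) (p j) (w i - w j))"

end

theory Submission
  imports Defs
begin

(*
  Existence is variational.  Write env w z = min_i (d_i z - w_i) for the lower envelope and
  consider the potential  F w = \<integral>_C env w + \<Sum>_i lam_i w_i.  Raising the weight w_i by
  t > 0 changes F by at least t (lam_i - \<mu>(C \<inter> VR_{w+t e_i}(i))).  Hence at a maximiser of F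
  over a large box [0,R]^n (normalised so that its smallest weight is 0) every site whose
  weight is below R gets at least mass lam_i; this uses that the regions shrink to
  VR_w(i) as t \<down> 0 up to ties, and ties are null sets because admissibility makes
  \<gamma> \<mapsto> \<mu>(C \<inter> R_\<gamma>(p,q)) continuous.  A weight R far above the minimal one would empty the
  region of the minimal site, so all weights are below R, and since the masses add up to
  at most \<mu>(C) = \<Sum> lam_i all inequalities are equalities.

  Uniqueness: if w, w' both solve the problem and w' - w is not constant, let I be the sites
  where w' - w is maximal and J the others.  The I-regions only grow from w to w', but keep
  the same total mass, so they can only gain a null set.  On a connected C, however, the
  continuous function env_I - env_J changes sign, and points where it is slightly positive
  form a nonempty open set that passes from the J-regions to the I-regions.
*)

lemma continuous_on_Min_family:
  fixes f :: "'i \<Rightarrow> 'b::topological_space \<Rightarrow> real"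
  shows "finite I \<Longrightarrow> I \<noteq> {} \<Longrightarrow> (\<And>i. i \<in> I \<Longrightarrow> continuous_on S (f i)) \<Longrightarrow>
    continuous_on S (\<lambda>z. Min ((\<lambda>i. f i z) ` I))"
proof (induction I rule: finite_ne_induct)
  case (singleton x)
  then show ?case by simp
next
  case (insert x F)
  have "continuous_on S (\<lambda>z. min (f x z) (Min ((\<lambda>i. f i z) ` F)))"
    by (intro continuous_on_min) (use insert in auto)
  then show ?case using insert by (simp add: Min_insert)
qed

text \<open>If the distribution function \<gamma> \<mapsto> \<mu>(A \<inter> {f < \<gamma>}) is continuous at g, then the level set
  {f = g} inside A is a null set: it is squeezed between {f < g} and {f < g + e}.\<close>

lemma level_set_null_of_continuous_distribution:
  fixes f :: "'a \<Rightarrow> real"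
  assumes A: "A \<in> sets M" "emeasure M A < \<infinity>"
    and meas: "\<And>\<gamma>. A \<inter> {z. f z < \<gamma>} \<in> sets M" "A \<inter> {z. f z = g} \<in> sets M"
    and cont: "isCont (\<lambda>\<gamma>. emeasure M (A \<inter> {z. f z < \<gamma>})) g"
  shows "emeasure M (A \<inter> {z. f z = g}) = 0"
proof -
  define E where "E \<gamma> = emeasure M (A \<inter> {z. f z < \<gamma>})" for \<gamma>
  define T where "T = A \<inter> {z. f z = g}"
  have squeeze: "emeasure M T + E g \<le> E (g + e)" if "e > 0" for e
  proof -
    have "emeasure M T + E g = emeasure M (T \<union> (A \<inter> {z. f z < g}))"
      unfolding E_def T_def by (rule plus_emeasure[OF meas(2) meas(1)]) auto
    also have "\<dots> \<le> E (g + e)"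
      unfolding E_def T_def by (rule emeasure_mono[OF _ meas(1)]) (use that in auto)
    finally show ?thesis .
  qed
  have "((\<lambda>e::real. g + e) \<longlongrightarrow> g + 0) (at_right 0)"
    by (intro tendsto_add tendsto_const tendsto_ident_at)
  then have lim: "((\<lambda>e. E (g + e)) \<longlongrightarrow> E g) (at_right 0)"
    using isCont_tendsto_compose[OF cont[folded E_def]] by simp
  have "emeasure M T + E g \<le> E g"
  proof (rule tendsto_lowerbound[OF lim])
    show "\<forall>\<^sub>F e in at_right 0. emeasure M T + E g \<le> E (g + e)"
      using eventually_at_right_less[of 0] by (rule eventually_mono) (rule squeeze)
  qed simp
  moreover have "E g < \<infinity>"
    unfolding E_def by (rule le_less_trans[OF emeasure_mono[OF _ A(1)] A(2)]) auto
  ultimately have "emeasure M T \<le> 0"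
    by (metis add.commute add.right_neutral ennreal_add_left_cancel_le less_imp_neq)
  then show ?thesis unfolding T_def by simp
qed

lemma continuous_on_coordinatewise_lipschitz:
  fixes F :: "(nat \<Rightarrow> real) \<Rightarrow> real"
  assumes lip: "\<And>w w' e. 0 \<le> e \<Longrightarrow> (\<forall>i<n. \<bar>w' i - w i\<bar> \<le> e) \<Longrightarrow> \<bar>F w' - F w\<bar> \<le> L * e"
  shows "continuous_on UNIV F"
proof (rule continuous_at_imp_continuous_on, intro ballI)
  fix w :: "nat \<Rightarrow> real"
  show "isCont F w" unfolding continuous_at
  proof (rule tendstoI)
    fix \<epsilon> :: real assume \<epsilon>: "\<epsilon> > 0"
    define \<delta> where "\<delta> = \<epsilon> / (2 * (\<bar>L\<bar> + 1))"
    have L1: "0 < \<bar>L\<bar> + 1" by simp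
    then have "\<delta> > 0" unfolding \<delta>_def using \<epsilon> by simp
    moreover have "(\<bar>L\<bar> + 1) * \<delta> = \<epsilon> / 2" unfolding \<delta>_def using L1 by (simp add: field_simps)
    then have "\<bar>L\<bar> * \<delta> + \<delta> = \<epsilon> / 2" by (simp add: distrib_right)
    ultimately have \<delta>: "\<delta> > 0" "\<bar>L\<bar> * \<delta> < \<epsilon>" using \<epsilon> by linarith+
    define V where "V = {x. \<forall>i\<in>{..<n}. x ((\<lambda>i. i) i) \<in> ball (w i) \<delta>}"
    have "open V" unfolding V_def by (rule product_topology_basis') auto
    moreover have "w \<in> V" unfolding V_def using \<delta> by auto
    moreover have "dist (F x) (F w) < \<epsilon>" if "x \<in> V" for x
    proof -
      have "\<forall>i<n. \<bar>x i - w i\<bar> \<le> \<delta>"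
        using that unfolding V_def by (force simp: dist_real_def abs_minus_commute)
      then have "\<bar>F x - F w\<bar> \<le> L * \<delta>" using lip \<delta> by simp
      moreover have "L * \<delta> \<le> \<bar>L\<bar> * \<delta>"
        using mult_right_mono[OF abs_ge_self less_imp_le[OF \<delta>(1)]] .
      ultimately show ?thesis using \<delta>(2) by (simp add: dist_real_def)
    qed
    ultimately have "eventually (\<lambda>x. dist (F x) (F w) < \<epsilon>) (nhds w)"
      unfolding eventually_nhds by blast
    then show "eventually (\<lambda>x. dist (F x) (F w) < \<epsilon>) (at w)"
      unfolding eventually_at_filter by (rule eventually_mono) simp
  qed
qed

lemma connected_small_positive_value:
  fixes g :: "'a::topological_space \<Rightarrow> real"
  assumes "connected S" "continuous_on S g" "z1 \<in> S" "z2 \<in> S" "g z1 < 0" "0 < g z2" "0 < \<delta>"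
  shows "\<exists>z\<in>S. 0 < g z \<and> g z < \<delta>"
proof -
  define \<epsilon> where "\<epsilon> = min \<delta> (g z2) / 2"
  have \<epsilon>: "0 < \<epsilon>" "\<epsilon> < \<delta>" "\<epsilon> \<le> g z2" unfolding \<epsilon>_def using assms(6,7) by auto
  have "connected (g ` S)" by (rule connected_continuous_image[OF assms(2,1)])
  then have "\<epsilon> \<in> g ` S"
    by (rule connectedD_interval[OF _ imageI[OF assms(3)] imageI[OF assms(4)]])
       (use \<epsilon> assms(5) in auto)
  then show ?thesis using \<epsilon> by auto
qed

lemma emeasure_Diff_same_mass:
  assumes "A \<subseteq> A'" "A \<in> sets M" "A' \<in> sets M" "emeasure M A' = emeasure M A" "emeasure M A < \<infinity>"
  shows "emeasure M (A' - A) = 0"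
  using assms by (subst emeasure_Diff) auto

lemma VR_shift:
  assumes "\<forall>i<n. w' i = w i + c" "i < n"
  shows "VR D p n w' i = VR D p n w i"
  unfolding VR_def Rgam_def using assms by auto

locale weighted_voronoi =
  fixes M :: "'a::euclidean_space measure" and D :: "'a \<Rightarrow> 'a \<Rightarrow> real"
    and p :: "nat \<Rightarrow> 'a" and n :: nat and C :: "'a set"
  assumes mutually_ac: "mutually_ac_lebesgue M" and n_pos: "0 < n" and inj: "inj_on p {..<n}"
    and adm: "admissible M D (p ` {..<n})" and bounded_C: "bounded C" and open_C: "open C"
    and finite_C: "emeasure M C < \<infinity>"
begin

lemma sets_M: "sets M = sets lebesgue"
  using mutually_ac by (simp add: mutually_ac_lebesgue_def)

lemma space_M: "space M = UNIV"
  using sets_eq_imp_space_eq[OF sets_M] by simp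

lemma open_meas: "open U \<Longrightarrow> U \<in> sets M"
  and closed_meas: "closed U \<Longrightarrow> U \<in> sets M"
  by (simp_all add: sets_M)

lemma C_meas: "C \<in> sets M"
  using open_C by (rule open_meas)

text \<open>Since \<mu> has the same null sets as Lebesgue measure, nonempty open sets are not null.\<close>

lemma open_null_empty:
  assumes "open U" "emeasure M U = 0"
  shows "U = {}"
proof -
  have "U \<in> null_sets M" using assms open_meas by (simp add: null_sets_def)
  then have "U \<in> null_sets lebesgue" using mutually_ac by (simp add: mutually_ac_lebesgue_def)
  then show ?thesis using open_not_negligible[OF assms(1)] negligible_iff_null_sets by blast
qed

lemma dist_cont: "i < n \<Longrightarrow> continuous_on UNIV (D (p i))"
  using adm by (auto simp: admissible_def)

lemma borel_measurable_continuous: "continuous_on UNIV (g::'a \<Rightarrow> real) \<Longrightarrow> g \<in> borel_measurable M"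
  by (subst measurable_cong_sets[OF sets_M refl], rule measurable_completion,
      simp add: borel_measurable_continuous_onI)

lemma emeasure_subset_C: "A \<subseteq> C \<Longrightarrow> emeasure M A = ennreal (measure M A)"
proof -
  assume "A \<subseteq> C"
  then have "emeasure M A \<le> emeasure M C" by (rule emeasure_mono[OF _ C_meas])
  then show ?thesis using finite_C by (intro emeasure_eq_ennreal_measure) auto
qed

lemma distances_bounded: "\<exists>B. \<forall>i<n. \<forall>z\<in>C. \<bar>D (p i) z\<bar> \<le> B"
proof -
  have "bounded (\<Union>i<n. D (p i) ` closure C)"
    using bounded_C by (auto intro!: compact_imp_bounded compact_continuous_image
        continuous_on_subset[OF dist_cont] simp: compact_closure)
  then obtain B where "\<forall>x\<in>(\<Union>i<n. D (p i) ` closure C). \<bar>x\<bar> \<le> B" by (auto simp: bounded_real)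
  then show ?thesis using closure_subset by fastforce
qed

text \<open>Ties between two distinct sites are null sets inside C.  This is the only consequence
  of admissibility that the argument needs.\<close>

lemma tie_null:
  assumes ij: "i < n" "j < n" "i \<noteq> j"
  shows "C \<inter> {z. D (p i) z - D (p j) z = g} \<in> null_sets M"
proof -
  have "p i \<noteq> p j" using inj ij by (auto dest: inj_onD)
  then have "continuous_on UNIV (\<lambda>\<gamma>. emeasure M (C \<inter> Rgam D (p i) (p j) \<gamma>))"
    using adm ij bounded_C open_C unfolding admissible_def by (metis imageI lessThan_iff)
  then have cont: "isCont (\<lambda>\<gamma>. emeasure M (C \<inter> {z. D (p i) z - D (p j) z < \<gamma>})) g"
    by (simp add: continuous_on_eq_continuous_at Rgam_def)
  have meas_lt: "C \<inter> {z. D (p i) z - D (p j) z < \<gamma>} \<in> sets M" for \<gamma>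
    by (intro sets.Int C_meas open_meas open_Collect_less continuous_intros dist_cont ij)
  have meas_eq: "C \<inter> {z. D (p i) z - D (p j) z = g} \<in> sets M"
    by (intro sets.Int C_meas closed_meas closed_Collect_eq continuous_intros dist_cont ij)
  show ?thesis
    using level_set_null_of_continuous_distribution[OF C_meas finite_C meas_lt meas_eq cont]
      meas_eq by (simp add: null_sets_def)
qed

definition ties :: "(nat \<Rightarrow> real) \<Rightarrow> 'a set" where
  "ties w = {z. \<exists>i<n. \<exists>j<n. i \<noteq> j \<and> D (p i) z - w i = D (p j) z - w j}"

lemma ties_null: "C \<inter> ties w \<in> null_sets M"
proof -
  have "C \<inter> ties w = (\<Union>i<n. \<Union>j\<in>{..<n} - {i}. C \<inter> {z. D (p i) z - D (p j) z = w i - w j})"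
    unfolding ties_def by (auto simp: algebra_simps)
  also have "\<dots> \<in> null_sets M"
    by (intro null_sets.finite_UN tie_null) auto
  finally show ?thesis .
qed

section \<open>The lower envelope\<close>

definition env :: "(nat \<Rightarrow> real) \<Rightarrow> nat set \<Rightarrow> 'a \<Rightarrow> real" where
  "env w I z = Min ((\<lambda>i. D (p i) z - w i) ` I)"

lemma env_le: "finite I \<Longrightarrow> i \<in> I \<Longrightarrow> env w I z \<le> D (p i) z - w i"
  unfolding env_def by (rule Min_le) auto

lemma env_attained: "finite I \<Longrightarrow> I \<noteq> {} \<Longrightarrow> \<exists>i\<in>I. env w I z = D (p i) z - w i"
proof -
  assume "finite I" "I \<noteq> {}"
  then have "env w I z \<in> (\<lambda>i. D (p i) z - w i) ` I" unfolding env_def by (intro Min_in) auto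
  then show ?thesis by auto
qed

lemma env_cont: "I \<subseteq> {..<n} \<Longrightarrow> I \<noteq> {} \<Longrightarrow> continuous_on UNIV (env w I)"
  unfolding env_def
  by (intro continuous_on_Min_family continuous_intros dist_cont) (auto intro: finite_subset)

lemma env_lipschitz:
  assumes "finite I" "I \<noteq> {}" "\<forall>i\<in>I. \<bar>w' i - w i\<bar> \<le> e"
  shows "\<bar>env w' I z - env w I z\<bar> \<le> e"
proof -
  obtain i where i: "i \<in> I" "env w I z = D (p i) z - w i" using env_attained assms by blast
  obtain k where k: "k \<in> I" "env w' I z = D (p k) z - w' k" using env_attained assms by blast
  have "env w' I z \<le> D (p i) z - w' i" "env w I z \<le> D (p k) z - w k"
    by (rule env_le[OF assms(1) i(1)], rule env_le[OF assms(1) k(1)])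
  then show ?thesis using assms(3) i k by (smt (verit))
qed

lemma env_shift:
  assumes "finite I" "I \<noteq> {}" "\<forall>i\<in>I. w' i = w i + s"
  shows "env w' I z = env w I z - s"
proof -
  obtain i where i: "i \<in> I" "env w I z = D (p i) z - w i" using env_attained assms by blast
  obtain k where k: "k \<in> I" "env w' I z = D (p k) z - w' k" using env_attained assms by blast
  have "env w' I z \<le> D (p i) z - w' i" "env w I z \<le> D (p k) z - w k"
    by (rule env_le[OF assms(1) i(1)], rule env_le[OF assms(1) k(1)])
  then show ?thesis using assms(3) i k by (smt (verit))
qed

lemma VR_iff:
  "i < n \<Longrightarrow> z \<in> VR D p n w i \<longleftrightarrow> (\<forall>j<n. j \<noteq> i \<longrightarrow> D (p i) z - w i < D (p j) z - w j)"
  unfolding VR_def Rgam_def by (auto simp: algebra_simps)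

lemma VR_meas: "i < n \<Longrightarrow> C \<inter> VR D p n w i \<in> sets M"
  unfolding VR_def Rgam_def
  by (intro sets.Int C_meas open_meas open_INT ballI open_Collect_less continuous_intros dist_cont) auto

lemma VR_disjoint: "disjoint_family_on (\<lambda>i. C \<inter> VR D p n w i) {..<n}"
  unfolding disjoint_family_on_def using VR_iff by fastforce

lemma VR_mono_max_shift:
  assumes "i < n" "\<forall>j<n. w' j - w j \<le> w' i - w i"
  shows "VR D p n w i \<subseteq> VR D p n w' i"
  using assms by (force simp: VR_iff)

lemma VR_env_less:
  assumes "i \<in> I" "I \<subseteq> {..<n}" "J \<subseteq> {..<n}" "J \<noteq> {}" "I \<inter> J = {}" "z \<in> VR D p n w i"
  shows "env w I z < env w J z"
proof -
  have fin: "finite I" "finite J" using assms(2,3) by (auto intro: finite_subset)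
  obtain j where j: "j \<in> J" "env w J z = D (p j) z - w j" using env_attained fin assms(4) by blast
  have "D (p i) z - w i < D (p j) z - w j"
    using assms j VR_iff[of i z w] by blast
  then show ?thesis using env_le[OF fin(1) assms(1), of w z] j by linarith
qed

lemma Union_VR_meas: "I \<subseteq> {..<n} \<Longrightarrow> (\<Union>i\<in>I. C \<inter> VR D p n w i) \<in> sets M"
  by (intro sets.finite_UN VR_meas) (auto intro: finite_subset)

lemma emeasure_Union_VR:
  "I \<subseteq> {..<n} \<Longrightarrow> emeasure M (\<Union>i\<in>I. C \<inter> VR D p n w i) = (\<Sum>i\<in>I. emeasure M (C \<inter> VR D p n w i))"
  by (rule sum_emeasure[symmetric])
     (auto intro: VR_meas finite_subset disjoint_family_on_mono[OF _ VR_disjoint])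

lemma sum_measure_VR_le: "(\<Sum>i<n. measure M (C \<inter> VR D p n w i)) \<le> measure M C"
proof -
  have "(\<Sum>i<n. ennreal (measure M (C \<inter> VR D p n w i))) = emeasure M (\<Union>i<n. C \<inter> VR D p n w i)"
    using emeasure_Union_VR[of "{..<n}" w] emeasure_subset_C by simp
  also have "\<dots> \<le> ennreal (measure M C)"
    using emeasure_mono[OF _ C_meas] emeasure_subset_C[of C] by auto
  finally show ?thesis by (simp add: sum_ennreal ennreal_le_iff)
qed

definition VR_closed :: "(nat \<Rightarrow> real) \<Rightarrow> nat \<Rightarrow> 'a set" where
  "VR_closed w i = (\<Inter>j\<in>{..<n} - {i}. {z. D (p i) z - w i \<le> D (p j) z - w j})"

lemma VR_closed_meas: "i < n \<Longrightarrow> C \<inter> VR_closed w i \<in> sets M"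
  unfolding VR_closed_def
  by (intro sets.Int C_meas closed_meas closed_INT ballI closed_Collect_le continuous_intros dist_cont)
     auto

text \<open>The closed region differs from the open one only by ties, so both have the same mass.\<close>

lemma measure_VR_closed:
  assumes i: "i < n"
  shows "measure M (C \<inter> VR_closed w i) = measure M (C \<inter> VR D p n w i)"
proof -
  have "C \<inter> VR_closed w i \<subseteq> (C \<inter> VR D p n w i) \<union> (C \<inter> VR_closed w i \<inter> (C \<inter> ties w))"
  proof
    fix z assume z: "z \<in> C \<inter> VR_closed w i"
    show "z \<in> (C \<inter> VR D p n w i) \<union> (C \<inter> VR_closed w i \<inter> (C \<inter> ties w))"
    proof (cases "z \<in> VR D p n w i")
      case False
      then obtain j where j: "j < n" "j \<noteq> i" "\<not> D (p i) z - w i < D (p j) z - w j"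
        unfolding VR_iff[OF i] by blast
      moreover have "D (p i) z - w i \<le> D (p j) z - w j" using z j unfolding VR_closed_def by auto
      ultimately have "z \<in> ties w" unfolding ties_def using i by force
      then show ?thesis using z by auto
    qed (use z in auto)
  qed
  moreover have "C \<inter> VR D p n w i \<subseteq> C \<inter> VR_closed w i"
    by (auto simp: VR_closed_def VR_iff[OF i] intro: less_imp_le)
  ultimately have split: "C \<inter> VR_closed w i = (C \<inter> VR D p n w i) \<union> (C \<inter> VR_closed w i \<inter> (C \<inter> ties w))"
    by blast
  show ?thesis
    by (subst split)
       (rule measure_Un_null_set[OF VR_meas[OF i] null_set_Int1[OF ties_null VR_closed_meas[OF i]]])
qed

lemma VR_raised_decseq:
  assumes i: "i < n"
  shows "decseq (\<lambda>k. C \<inter> VR D p n (w(i := w i + 1 / Suc k)) i)"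
proof (rule decseq_SucI)
  fix k
  have "1 / real (Suc (Suc k)) \<le> 1 / real (Suc k)" by (rule divide_left_mono) auto
  then show "C \<inter> VR D p n (w(i := w i + 1 / Suc (Suc k))) i \<subseteq> C \<inter> VR D p n (w(i := w i + 1 / Suc k)) i"
    by (intro Int_mono order_refl VR_mono_max_shift[OF i]) auto
qed

lemma Inter_VR_raised:
  assumes i: "i < n"
  shows "(\<Inter>k. VR D p n (w(i := w i + 1 / Suc k)) i) = VR_closed w i"
proof (intro equalityI subsetI)
  fix z assume z: "z \<in> (\<Inter>k. VR D p n (w(i := w i + 1 / Suc k)) i)"
  have "D (p i) z - w i \<le> D (p j) z - w j" if j: "j < n" "j \<noteq> i" for j
  proof (rule ccontr)
    assume "\<not> ?thesis"
    then obtain k where k: "1 / real (Suc k) < D (p i) z - w i - (D (p j) z - w j)"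
      using reals_Archimedean[of "D (p i) z - w i - (D (p j) z - w j)"]
      by (auto simp: inverse_eq_divide)
    have "z \<in> VR D p n (w(i := w i + 1 / Suc k)) i" using z by blast
    then have "D (p i) z - (w i + 1 / real (Suc k)) < D (p j) z - w j"
      using j VR_iff[OF i, of z "w(i := w i + 1 / real (Suc k))"] by auto
    with k show False by linarith
  qed
  then show "z \<in> VR_closed w i" unfolding VR_closed_def by auto
next
  fix z assume z: "z \<in> VR_closed w i"
  have "z \<in> VR D p n (w(i := w i + 1 / Suc k)) i" for k
  proof -
    have "D (p i) z - (w i + 1 / real (Suc k)) < D (p j) z - w j" if j: "j < n" "j \<noteq> i" for j
    proof -
      have "D (p i) z - w i \<le> D (p j) z - w j" using z j unfolding VR_closed_def by auto
      moreover have "0 < 1 / real (Suc k)" by simp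
      ultimately show ?thesis by linarith
    qed
    then show ?thesis using VR_iff[OF i, of z "w(i := w i + 1 / real (Suc k))"] by auto
  qed
  then show "z \<in> (\<Inter>k. VR D p n (w(i := w i + 1 / Suc k)) i)" by blast
qed

lemma measure_VR_raised_limit:
  assumes i: "i < n"
  shows "(\<lambda>k. measure M (C \<inter> VR D p n (w(i := w i + 1 / Suc k)) i))
           \<longlonglongrightarrow> measure M (C \<inter> VR D p n w i)"
proof -
  have "(\<lambda>k. measure M (C \<inter> VR D p n (w(i := w i + 1 / Suc k)) i))
          \<longlonglongrightarrow> measure M (\<Inter>k. C \<inter> VR D p n (w(i := w i + 1 / Suc k)) i)"
    by (rule Lim_measure_decseq[OF _ VR_raised_decseq[OF i]])
       (use VR_meas[OF i] emeasure_subset_C in auto)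
  moreover have "(\<Inter>k. C \<inter> VR D p n (w(i := w i + 1 / Suc k)) i) = C \<inter> VR_closed w i"
    using Inter_VR_raised[OF i, of w] by blast
  ultimately show ?thesis using measure_VR_closed[OF i] by simp
qed

end

locale voronoi_masses = weighted_voronoi +
  fixes lam :: "nat \<Rightarrow> real"
  assumes lam_pos: "\<forall>i<n. lam i > 0"
    and mass_C: "emeasure M C = ennreal (\<Sum>i<n. lam i)"
begin

lemma measure_C: "measure M C = (\<Sum>i<n. lam i)"
proof -
  have "0 \<le> (\<Sum>i<n. lam i)" using lam_pos by (auto intro: sum_nonneg less_imp_le)
  then show ?thesis using mass_C by (simp add: measure_def)
qed

lemma region_nonempty:
  assumes "i < n" "emeasure M (C \<inter> VR D p n w i) = ennreal (lam i)"
  shows "\<exists>z\<in>C. z \<in> VR D p n w i"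
proof (rule ccontr)
  assume "\<not> ?thesis"
  then have "C \<inter> VR D p n w i = {}" by auto
  then have "ennreal (lam i) = 0" using assms(2) by simp
  then show False using lam_pos assms(1) by (simp add: ennreal_eq_0_iff not_le[symmetric])
qed

subsection \<open>The potential\<close>

definition potential :: "(nat \<Rightarrow> real) \<Rightarrow> real" where
  "potential w = (\<integral>z. indicator C z * env w {..<n} z \<partial>M) + (\<Sum>i<n. lam i * w i)"

lemma integrable_indicator_C: "integrable M (\<lambda>z. c * indicator C z :: real)"
  using integrable_real_indicator[OF C_meas finite_C] by simp

lemma integrable_env: "integrable M (\<lambda>z. indicator C z * env w {..<n} z)"
proof -
  obtain B where B: "\<forall>i<n. \<forall>z\<in>C. \<bar>D (p i) z\<bar> \<le> B" using distances_bounded by blast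
  have bound: "AE z\<in>C in M. norm (env w {..<n} z) \<le> B + (\<Sum>i<n. \<bar>w i\<bar>)"
  proof (rule AE_I2, rule impI)
    fix z assume z: "z \<in> C"
    obtain i where i: "i < n" "env w {..<n} z = D (p i) z - w i"
      using env_attained[of "{..<n}"] n_pos by auto
    have "\<bar>w i\<bar> \<le> (\<Sum>i<n. \<bar>w i\<bar>)" by (rule member_le_sum) (use i in auto)
    then show "norm (env w {..<n} z) \<le> B + (\<Sum>i<n. \<bar>w i\<bar>)" using B i z by fastforce
  qed
  have "env w {..<n} \<in> borel_measurable M"
    by (rule borel_measurable_continuous[OF env_cont]) (use n_pos in auto)
  from integrableI_bounded_set_indicator[OF C_meas this finite_C bound]
  show ?thesis by simp
qed

lemma integrable_env_diff:
  "integrable M (\<lambda>z. indicator C z * (env w' {..<n} z - env w {..<n} z))"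
  using Bochner_Integration.integrable_diff[OF integrable_env integrable_env]
  by (simp add: right_diff_distrib)

lemma potential_diff:
  "potential w' - potential w =
     (\<integral>z. indicator C z * (env w' {..<n} z - env w {..<n} z) \<partial>M) + (\<Sum>i<n. lam i * (w' i - w i))"
proof -
  have "(\<integral>z. indicator C z * env w' {..<n} z \<partial>M) - (\<integral>z. indicator C z * env w {..<n} z \<partial>M)
      = (\<integral>z. indicator C z * env w' {..<n} z - indicator C z * env w {..<n} z \<partial>M)"
    by (rule Bochner_Integration.integral_diff[symmetric]) (rule integrable_env)+
  moreover have "(\<Sum>i<n. lam i * w' i) - (\<Sum>i<n. lam i * w i) = (\<Sum>i<n. lam i * (w' i - w i))"
    by (simp add: sum_subtractf right_diff_distrib)
  ultimately show ?thesis unfolding potential_def by (simp add: right_diff_distrib)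
qed

lemma potential_lipschitz:
  assumes e: "0 \<le> e" "\<forall>i<n. \<bar>w' i - w i\<bar> \<le> e"
  shows "\<bar>potential w' - potential w\<bar> \<le> (measure M C + (\<Sum>i<n. lam i)) * e"
proof -
  have "\<bar>\<integral>z. indicator C z * (env w' {..<n} z - env w {..<n} z) \<partial>M\<bar>
      \<le> (\<integral>z. \<bar>indicator C z * (env w' {..<n} z - env w {..<n} z)\<bar> \<partial>M)"
    using integral_norm_bound[of M] by simp
  also have "\<dots> \<le> (\<integral>z. e * indicator C z \<partial>M)"
  proof (rule integral_mono[OF integrable_abs[OF integrable_env_diff] integrable_indicator_C])
    fix z
    have "\<bar>env w' {..<n} z - env w {..<n} z\<bar> \<le> e"
      by (rule env_lipschitz) (use e n_pos in auto)
    then show "\<bar>indicator C z * (env w' {..<n} z - env w {..<n} z)\<bar> \<le> e * indicator C z"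
      by (auto simp: indicator_def)
  qed
  also have "\<dots> = measure M C * e" by (simp add: space_M)
  finally have integral: "\<bar>\<integral>z. indicator C z * (env w' {..<n} z - env w {..<n} z) \<partial>M\<bar> \<le> measure M C * e" .
  have "\<bar>\<Sum>i<n. lam i * (w' i - w i)\<bar> \<le> (\<Sum>i<n. \<bar>lam i * (w' i - w i)\<bar>)" by (rule sum_abs)
  also have "\<dots> \<le> (\<Sum>i<n. lam i * e)"
    by (rule sum_mono) (use e lam_pos in \<open>auto simp: abs_mult intro!: mult_left_mono\<close>)
  finally have "\<bar>\<Sum>i<n. lam i * (w' i - w i)\<bar> \<le> (\<Sum>i<n. lam i) * e" by (simp add: sum_distrib_right)
  then show ?thesis using integral potential_diff[of w' w] by (simp add: distrib_right)
qed

lemma potential_continuous: "continuous_on UNIV potential"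
  by (rule continuous_on_coordinatewise_lipschitz[OF potential_lipschitz])

text \<open>Since the masses add up to \<mu>(C), adding a constant to all weights does not change the
  potential.\<close>

lemma potential_shift:
  assumes "\<forall>i<n. w' i = w i + s"
  shows "potential w' = potential w"
proof -
  have "{..<n} \<noteq> {}" "\<forall>i\<in>{..<n}. w' i = w i + s" using n_pos assms by auto
  then have "env w' {..<n} z - env w {..<n} z = - s" for z
    using env_shift[OF finite_lessThan, of n w' w s z] by simp
  then have "potential w' - potential w = (\<integral>z. - s * indicator C z \<partial>M) + (\<Sum>i<n. lam i * s)"
    using potential_diff[of w' w] assms by (simp add: mult.commute)
  also have "\<dots> = 0" by (simp add: space_M measure_C sum_distrib_left mult.commute)
  finally show ?thesis by simp
qed

lemma env_raise:
  assumes i: "i < n" and t: "0 \<le> t"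
  shows "env (w(i := w i + t)) {..<n} z - env w {..<n} z
           \<ge> - t * indicator (VR D p n (w(i := w i + t)) i) z"
proof (cases "z \<in> VR D p n (w(i := w i + t)) i")
  case True
  have "\<bar>env (w(i := w i + t)) {..<n} z - env w {..<n} z\<bar> \<le> t"
    by (rule env_lipschitz) (use i t in auto)
  then show ?thesis using True by auto
next
  case False
  define w' where "w' = w(i := w i + t)"
  obtain k where k: "k < n" "env w' {..<n} z = D (p k) z - w' k"
    using env_attained[of "{..<n}"] n_pos by auto
  have "env w {..<n} z \<le> env w' {..<n} z"
  proof (cases "k = i")
    case False
    then show ?thesis using k env_le[of "{..<n}" k w z] unfolding w'_def by simp
  next
    case True
    then obtain j where j: "j < n" "j \<noteq> i" "\<not> D (p i) z - w' i < D (p j) z - w' j"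
      using \<open>z \<notin> VR D p n (w(i := w i + t)) i\<close> VR_iff[OF i] unfolding w'_def by blast
    have "env w' {..<n} z \<le> D (p j) z - w' j" by (rule env_le) (use j in auto)
    then have "env w' {..<n} z = D (p j) z - w j" using j True k unfolding w'_def by auto
    then show ?thesis using env_le[of "{..<n}" j w z] j by simp
  qed
  then show ?thesis using False unfolding w'_def by simp
qed

lemma potential_raise:
  assumes i: "i < n" and t: "0 < t"
  shows "potential (w(i := w i + t)) - potential w
           \<ge> t * lam i - t * measure M (C \<inter> VR D p n (w(i := w i + t)) i)"
proof -
  define A where "A = C \<inter> VR D p n (w(i := w i + t)) i"
  have A: "A \<in> sets M" "emeasure M A < \<infinity>"
    using VR_meas[OF i] emeasure_subset_C[of A] unfolding A_def by auto
  have "(\<integral>z. - t * indicator A z \<partial>M)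
      \<le> (\<integral>z. indicator C z * (env (w(i := w i + t)) {..<n} z - env w {..<n} z) \<partial>M)"
  proof (rule integral_mono[OF _ integrable_env_diff])
    show "integrable M (\<lambda>z. - t * indicator A z :: real)"
      using integrable_real_indicator[OF A] by simp
    fix z
    show "- t * indicator A z
        \<le> indicator C z * (env (w(i := w i + t)) {..<n} z - env w {..<n} z)"
      using env_raise[OF i less_imp_le[OF t], of w z] unfolding A_def
      by (auto simp: indicator_def)
  qed
  also have "(\<integral>z. - t * indicator A z \<partial>M) = - t * measure M A" by (simp add: space_M)
  finally have integral: "- t * measure M A
      \<le> (\<integral>z. indicator C z * (env (w(i := w i + t)) {..<n} z - env w {..<n} z) \<partial>M)" .
  have "(\<Sum>j<n. lam j * ((w(i := w i + t)) j - w j)) = (\<Sum>j<n. if j = i then lam i * t else 0)"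
    by (rule sum.cong) auto
  also have "\<dots> = lam i * t" using i by simp
  finally show ?thesis using integral potential_diff[of "w(i := w i + t)" w]
    unfolding A_def by (simp add: mult.commute)
qed

subsection \<open>Existence\<close>

definition weight_box :: "real \<Rightarrow> (nat \<Rightarrow> real) set" where
  "weight_box R = PiE UNIV (\<lambda>i. if i < n then {0..R} else {0})"

lemma weight_box_iff:
  "x \<in> weight_box R \<longleftrightarrow> (\<forall>j<n. 0 \<le> x j \<and> x j \<le> R) \<and> (\<forall>j. n \<le> j \<longrightarrow> x j = 0)"
  unfolding weight_box_def by (auto simp: PiE_iff not_less)

lemma compact_weight_box: "compact (weight_box R)"
proof -
  have "compactin (product_topology (\<lambda>i. euclidean) UNIV) (weight_box R)"
    unfolding weight_box_def by (subst compactin_PiE) (auto simp: compactin_euclidean_iff)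
  then show ?thesis by (simp add: euclidean_product_topology compactin_euclidean_iff)
qed

text \<open>The potential attains its maximum on the box at a weight vector whose smallest weight
  is 0 (shift a maximiser down; this leaves the potential unchanged).\<close>

lemma normalized_maximizer:
  assumes "0 \<le> R"
  shows "\<exists>w\<in>weight_box R. (\<exists>k<n. w k = 0) \<and> (\<forall>x\<in>weight_box R. potential x \<le> potential w)"
proof -
  have "(\<lambda>i. 0) \<in> weight_box R" using assms by (simp add: weight_box_iff)
  moreover have "compact (potential ` weight_box R)"
    by (rule compact_continuous_image[OF continuous_on_subset[OF potential_continuous]
          compact_weight_box]) simp
  ultimately obtain w0 where w0: "w0 \<in> weight_box R" "\<forall>x\<in>weight_box R. potential x \<le> potential w0"
    using compact_attains_sup[of "potential ` weight_box R"] by fastforce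
  define s where "s = Min (w0 ` {..<n})"
  have "s \<in> w0 ` {..<n}" unfolding s_def using n_pos by (intro Min_in) auto
  then obtain k where k: "k < n" "s = w0 k" by auto
  have s_le: "s \<le> w0 i" if "i < n" for i unfolding s_def by (rule Min_le) (use that in auto)
  define w where "w i = (if i < n then w0 i - s else 0)" for i
  have "0 \<le> s" using w0(1) k by (simp add: weight_box_iff)
  then have "w \<in> weight_box R"
    using w0(1) s_le unfolding weight_box_iff w_def by (auto simp: not_less)
  moreover have "w k = 0" using k unfolding w_def by simp
  moreover have "potential w = potential w0"
    by (rule potential_shift[of _ _ "- s"]) (simp add: w_def)
  ultimately show ?thesis using w0(2) k(1) by auto
qed

text \<open>First-order optimality: at a maximiser, a site whose weight can still be raised gets at
  least its prescribed mass.\<close>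

lemma maximizer_mass_lower_bound:
  assumes w: "w \<in> weight_box R" "\<forall>x\<in>weight_box R. potential x \<le> potential w"
    and i: "i < n" "w i < R"
  shows "lam i \<le> measure M (C \<inter> VR D p n w i)"
proof (rule LIMSEQ_le_const[OF measure_VR_raised_limit[OF i(1)]])
  have "0 < R - w i" using i(2) by simp
  from reals_Archimedean[OF this] obtain N where N: "inverse (real (Suc N)) < R - w i" by blast
  have "lam i \<le> measure M (C \<inter> VR D p n (w(i := w i + 1 / Suc k)) i)" if "N \<le> k" for k
  proof -
    define t where "t = 1 / real (Suc k)"
    have "t \<le> 1 / real (Suc N)" unfolding t_def using that by (intro divide_left_mono) auto
    then have t: "0 < t" "t \<le> R - w i" using N by (auto simp: t_def inverse_eq_divide)
    then have "w(i := w i + t) \<in> weight_box R" using w(1) i by (auto simp: weight_box_iff)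
    then have "potential (w(i := w i + t)) - potential w \<le> 0" using w(2) by auto
    then have "t * lam i \<le> t * measure M (C \<inter> VR D p n (w(i := w i + t)) i)"
      using potential_raise[OF i(1) t(1), of w] by linarith
    then have "lam i \<le> measure M (C \<inter> VR D p n (w(i := w i + t)) i)"
      using t(1) by (simp add: mult_le_cancel_left_pos)
    then show ?thesis unfolding t_def .
  qed
  then show "\<exists>N. \<forall>k\<ge>N. lam i \<le> measure M (C \<inter> VR D p n (w(i := w i + 1 / Suc k)) i)" by blast
qed

lemma region_empty_of_weight_gap:
  assumes B: "\<forall>i<n. \<forall>z\<in>C. \<bar>D (p i) z\<bar> \<le> B"
    and ik: "i < n" "k < n" "i \<noteq> k" and gap: "w i - w k > 2 * B"
  shows "C \<inter> VR D p n w k = {}"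
proof (rule ccontr)
  assume "C \<inter> VR D p n w k \<noteq> {}"
  then obtain z where z: "z \<in> C" "z \<in> VR D p n w k" by blast
  then have "D (p k) z - w k < D (p i) z - w i" using ik by (simp add: VR_iff[OF ik(2)])
  moreover have "\<bar>D (p k) z\<bar> \<le> B" "\<bar>D (p i) z\<bar> \<le> B" using B z ik by auto
  ultimately show False using gap by linarith
qed

text \<open>Since the regions are disjoint and the prescribed masses add up to \<mu>(C), lower bounds on
  all masses are equalities.\<close>

lemma masses_eq_of_lower_bounds:
  assumes lower: "\<forall>i<n. lam i \<le> measure M (C \<inter> VR D p n w i)"
  shows "\<forall>i<n. emeasure M (C \<inter> VR D p n w i) = ennreal (lam i)"
proof -
  have "(\<Sum>i<n. measure M (C \<inter> VR D p n w i) - lam i)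
      = (\<Sum>i<n. measure M (C \<inter> VR D p n w i)) - (\<Sum>i<n. lam i)"
    by (rule sum_subtractf)
  also have "\<dots> \<le> 0" using sum_measure_VR_le[of w] measure_C by linarith
  finally have "(\<Sum>i<n. measure M (C \<inter> VR D p n w i) - lam i) \<le> 0" .
  moreover have nonneg: "\<forall>i\<in>{..<n}. 0 \<le> measure M (C \<inter> VR D p n w i) - lam i"
    using lower by auto
  then have "0 \<le> (\<Sum>i<n. measure M (C \<inter> VR D p n w i) - lam i)" by (intro sum_nonneg) blast
  ultimately have "(\<Sum>i<n. measure M (C \<inter> VR D p n w i) - lam i) = 0" by linarith
  then have "\<forall>i\<in>{..<n}. measure M (C \<inter> VR D p n w i) - lam i = 0"
    by (subst (asm) sum_nonneg_eq_0_iff) (use nonneg in auto)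
  moreover have "emeasure M (C \<inter> VR D p n w i) = ennreal (measure M (C \<inter> VR D p n w i))" for i
    by (rule emeasure_subset_C) blast
  ultimately show ?thesis by simp
qed

theorem existence: "\<exists>w. \<forall>i<n. emeasure M (C \<inter> VR D p n w i) = ennreal (lam i)"
proof -
  obtain B where B: "\<forall>i<n. \<forall>z\<in>C. \<bar>D (p i) z\<bar> \<le> B" using distances_bounded by blast
  define R where "R = 2 * \<bar>B\<bar> + 1"
  obtain w k where w: "w \<in> weight_box R" "\<forall>x\<in>weight_box R. potential x \<le> potential w"
    and k: "k < n" "w k = 0"
    using normalized_maximizer[of R] unfolding R_def by auto
  have below_R: "w i < R" if i: "i < n" for i
  proof (rule ccontr)
    assume "\<not> w i < R"
    then have "i \<noteq> k" "w i - w k > 2 * B" using k(2) unfolding R_def by auto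
    then have "C \<inter> VR D p n w k = {}" by (rule region_empty_of_weight_gap[OF B i k(1)])
    moreover have "w k < R" using k(2) unfolding R_def by simp
    ultimately have "lam k \<le> 0" using maximizer_mass_lower_bound[OF w k(1)] by simp
    then show False using lam_pos k(1) by force
  qed
  have "\<forall>i<n. lam i \<le> measure M (C \<inter> VR D p n w i)"
    using maximizer_mass_lower_bound[OF w] below_R by blast
  then show ?thesis using masses_eq_of_lower_bounds by blast
qed

subsection \<open>Uniqueness\<close>

lemma gap_point_in_raised_region:
  assumes I: "I \<subseteq> {..<n}" "I \<noteq> {}" and J: "J = {..<n} - I"
    and shift: "\<forall>i\<in>I. w' i - w i = c" and gap: "\<forall>j\<in>J. w' j - w j \<le> c - \<delta>"
    and z: "z \<notin> ties w'" "env w I z - env w J z < \<delta>"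
  shows "\<exists>i\<in>I. z \<in> VR D p n w' i"
proof -
  have fin: "finite I" "finite J" using I J by (auto intro: finite_subset)
  obtain i where i: "i \<in> I" "env w I z = D (p i) z - w i" using env_attained fin I by blast
  have "D (p i) z - w' i < D (p j) z - w' j" if j: "j < n" "j \<noteq> i" for j
  proof (cases "j \<in> I")
    case True
    moreover have "w' i = w i + c" "w' j = w j + c" using shift i(1) True by auto
    ultimately have "D (p i) z - w' i \<le> D (p j) z - w' j"
      using env_le[OF fin(1) True, of w z] i(2) by linarith
    moreover have "D (p i) z - w' i \<noteq> D (p j) z - w' j"
      using z(1) j I i unfolding ties_def by blast
    ultimately show ?thesis by linarith
  next
    case False
    then have "j \<in> J" using J j by blast
    then show ?thesis using env_le[OF fin(2), of j w z] i z(2) shift gap by fastforce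
  qed
  then show ?thesis using i I VR_iff[of i z w'] by blast
qed

lemma VR_union_gain_null:
  assumes hw: "\<forall>i<n. emeasure M (C \<inter> VR D p n w i) = ennreal (lam i)"
    and hw': "\<forall>i<n. emeasure M (C \<inter> VR D p n w' i) = ennreal (lam i)"
    and I: "I \<subseteq> {..<n}" and grow: "\<And>i. i \<in> I \<Longrightarrow> VR D p n w i \<subseteq> VR D p n w' i"
  shows "emeasure M ((\<Union>i\<in>I. C \<inter> VR D p n w' i) - (\<Union>i\<in>I. C \<inter> VR D p n w i)) = 0"
proof (rule emeasure_Diff_same_mass)
  show "(\<Union>i\<in>I. C \<inter> VR D p n w i) \<in> sets M" "(\<Union>i\<in>I. C \<inter> VR D p n w' i) \<in> sets M"
    using Union_VR_meas[OF I] by blast+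
  have "emeasure M (\<Union>i\<in>I. C \<inter> VR D p n v i) = (\<Sum>i\<in>I. ennreal (lam i))"
    if "\<forall>i<n. emeasure M (C \<inter> VR D p n v i) = ennreal (lam i)" for v
    using emeasure_Union_VR[OF I] that I by (auto intro: sum.cong)
  then show "emeasure M (\<Union>i\<in>I. C \<inter> VR D p n w' i) = emeasure M (\<Union>i\<in>I. C \<inter> VR D p n w i)"
    using hw hw' by simp
  show "emeasure M (\<Union>i\<in>I. C \<inter> VR D p n w i) < \<infinity>"
    using emeasure_mono[OF _ C_meas, of "\<Union>i\<in>I. C \<inter> VR D p n w i"] finite_C by auto
  show "(\<Union>i\<in>I. C \<inter> VR D p n w i) \<subseteq> (\<Union>i\<in>I. C \<inter> VR D p n w' i)" using grow by blast
qed

text \<open>On a connected C, the envelope of a set I of sites minus the envelope of the remaining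
  sites J changes sign (it is negative on the regions of I and positive on those of J), so it
  takes arbitrarily small positive values.\<close>

lemma env_difference_small_positive:
  assumes conn: "connected C"
    and hw: "\<forall>i<n. emeasure M (C \<inter> VR D p n w i) = ennreal (lam i)"
    and I: "I \<subseteq> {..<n}" "I \<noteq> {}" and J: "J = {..<n} - I" "J \<noteq> {}" and "0 < \<delta>"
  shows "\<exists>z\<in>C. 0 < env w I z - env w J z \<and> env w I z - env w J z < \<delta>"
proof -
  have JI: "J \<subseteq> {..<n}" "I \<inter> J = {}" using J by auto
  have cont: "continuous_on C (\<lambda>z. env w I z - env w J z)"
    using I J JI by (intro continuous_on_subset[OF continuous_on_diff subset_UNIV] env_cont) auto
  obtain i1 z1 where "i1 \<in> I" "z1 \<in> C" "z1 \<in> VR D p n w i1"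
    using I region_nonempty hw by blast
  then have "z1 \<in> C" "env w I z1 - env w J z1 < 0" using VR_env_less[of i1 I J] I JI J by auto
  moreover obtain j2 z2 where "j2 \<in> J" "z2 \<in> C" "z2 \<in> VR D p n w j2"
    using J region_nonempty hw by blast
  then have "z2 \<in> C" "0 < env w I z2 - env w J z2"
    using VR_env_less[of j2 J I] I JI by (auto simp: Int_commute)
  ultimately show ?thesis
    using connected_small_positive_value[OF conn cont _ _ _ _ \<open>0 < \<delta>\<close>] by blast
qed

text \<open>On a connected C, two solutions cannot differ by a non-constant shift: the points where
  env_I - env_J lies in (0,\<delta>) form a nonempty open set that would pass from the regions of J
  to those of I without any gain of mass.\<close>

lemma no_weight_gap:
  assumes conn: "connected C"
    and hw: "\<forall>i<n. emeasure M (C \<inter> VR D p n w i) = ennreal (lam i)"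
    and hw': "\<forall>i<n. emeasure M (C \<inter> VR D p n w' i) = ennreal (lam i)"
    and I: "I \<subseteq> {..<n}" "I \<noteq> {}" and J: "J = {..<n} - I" "J \<noteq> {}"
    and shift: "\<forall>i\<in>I. w' i - w i = c" and gap: "\<forall>j\<in>J. w' j - w j \<le> c - \<delta>" and "0 < \<delta>"
  shows False
proof -
  define g where "g z = env w I z - env w J z" for z
  define U where "U = C \<inter> {z. 0 < g z} \<inter> {z. g z < \<delta>}"
  define A where "A v = (\<Union>i\<in>I. C \<inter> VR D p n v i)" for v
  have JI: "J \<subseteq> {..<n}" "I \<inter> J = {}" using J by auto
  have "U \<noteq> {}"
    using env_difference_small_positive[OF conn hw I J \<open>0 < \<delta>\<close>] unfolding U_def g_def by blast
  moreover have "open U" unfolding U_def g_def using I J JI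
    by (intro open_Int open_C open_Collect_less continuous_intros env_cont) auto
  moreover have "emeasure M U = 0"
  proof -
    have c_max: "w' j - w j \<le> c" if "j < n" for j
    proof (cases "j \<in> I")
      case False
      then have "j \<in> J" using J that by blast
      then show ?thesis using gap \<open>0 < \<delta>\<close> by fastforce
    qed (use shift in auto)
    have "VR D p n w i \<subseteq> VR D p n w' i" if "i \<in> I" for i
      using that I shift c_max by (intro VR_mono_max_shift) auto
    then have gain_null: "emeasure M (A w' - A w) = 0"
      unfolding A_def by (rule VR_union_gain_null[OF hw hw' I(1)])
    have "U - C \<inter> ties w' \<subseteq> A w' - A w"
    proof
      fix z assume "z \<in> U - C \<inter> ties w'"
      then have z: "z \<in> C" "z \<notin> ties w'" "0 < g z" "g z < \<delta>" unfolding U_def by auto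
      then obtain i where "i \<in> I" "z \<in> VR D p n w' i"
        using gap_point_in_raised_region[OF I J(1) shift gap] unfolding g_def by blast
      then have "z \<in> A w'" using z(1) unfolding A_def by blast
      moreover have "z \<notin> A w"
      proof
        assume "z \<in> A w"
        then obtain i where "i \<in> I" "z \<in> VR D p n w i" unfolding A_def by blast
        then have "g z < 0" using VR_env_less[OF _ I(1) JI(1) J(2) JI(2)] unfolding g_def by auto
        then show False using z(3) by simp
      qed
      ultimately show "z \<in> A w' - A w" by blast
    qed
    then have "emeasure M (U - C \<inter> ties w') \<le> emeasure M (A w' - A w)"
      by (rule emeasure_mono) (use Union_VR_meas[OF I(1)] in \<open>auto simp: A_def\<close>)
    then show ?thesis
      using gain_null emeasure_Diff_null_set[OF ties_null open_meas[OF \<open>open U\<close>]] by simp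
  qed
  ultimately show False using open_null_empty by blast
qed

text \<open>Uniqueness up to a common shift: otherwise the sites where w' - w is maximal and the
  remaining ones would exhibit a weight gap.\<close>

theorem uniqueness:
  assumes conn: "connected C"
    and hw: "\<forall>i<n. emeasure M (C \<inter> VR D p n w i) = ennreal (lam i)"
    and hw': "\<forall>i<n. emeasure M (C \<inter> VR D p n w' i) = ennreal (lam i)"
  shows "\<exists>c. \<forall>i<n. w' i = w i + c"
proof -
  define c where "c = Max ((\<lambda>i. w' i - w i) ` {..<n})"
  define I where "I = {i. i < n \<and> w' i - w i = c}"
  define J where "J = {..<n} - I"
  have c_ge: "w' i - w i \<le> c" if "i < n" for i unfolding c_def by (rule Max_ge) (use that in auto)
  have "c \<in> (\<lambda>i. w' i - w i) ` {..<n}" unfolding c_def using n_pos by (intro Max_in) auto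
  then have "I \<noteq> {}" unfolding I_def by auto
  show ?thesis
  proof (cases "J = {}")
    case True
    then show ?thesis unfolding J_def I_def by (intro exI[of _ c]) auto
  next
    case False
    define \<delta> where "\<delta> = c - Max ((\<lambda>j. w' j - w j) ` J)"
    have "finite J" unfolding J_def by simp
    then have "Max ((\<lambda>j. w' j - w j) ` J) \<in> (\<lambda>j. w' j - w j) ` J" using False by (intro Max_in) auto
    then have "0 < \<delta>" unfolding \<delta>_def J_def I_def using c_ge by fastforce
    moreover have "\<forall>j\<in>J. w' j - w j \<le> c - \<delta>" unfolding \<delta>_def using \<open>finite J\<close> by auto
    moreover have "I \<subseteq> {..<n}" "\<forall>i\<in>I. w' i - w i = c" unfolding I_def by auto
    ultimately show ?thesis using no_weight_gap[OF conn hw hw' _ \<open>I \<noteq> {}\<close> J_def False] by blast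
  qed
qed

end

theorem theorem1:
  fixes M :: "'a::euclidean_space measure"
    and D :: "'a \<Rightarrow> 'a \<Rightarrow> real"
    and p :: "nat \<Rightarrow> 'a"
    and n :: nat
    and C :: "'a set"
    and lam :: "nat \<Rightarrow> real"
  assumes "mutually_ac_lebesgue M"
    and "n \<ge> 2"
    and "inj_on p {..<n}"
    and "admissible M D (p ` {..<n})"
    and "bounded C" and "open C"
    and "\<forall>i<n. lam i > 0"
    and "emeasure M C = ennreal (\<Sum>i<n. lam i)"
  shows "(\<exists>w :: nat \<Rightarrow> real. \<forall>i<n. emeasure M (C \<inter> VR D p n w i) = ennreal (lam i))
       \<and> (path_connected C \<longrightarrow>
           (\<forall>w w'. (\<forall>i<n. emeasure M (C \<inter> VR D p n w i) = ennreal (lam i)) \<and>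
                   (\<forall>i<n. emeasure M (C \<inter> VR D p n w' i) = ennreal (lam i)) \<longrightarrow>
                   (\<exists>c::real. \<forall>i<n. w' i = w i + c) \<and>
                   (\<forall>i<n. C \<inter> VR D p n w' i = C \<inter> VR D p n w i)))"
proof -
  interpret voronoi_masses M D p n C lam
    by unfold_locales (use assms in auto)
  show ?thesis
  proof (intro conjI impI allI existence)
    fix w w' assume "path_connected C"
      and "(\<forall>i<n. emeasure M (C \<inter> VR D p n w i) = ennreal (lam i)) \<and>
           (\<forall>i<n. emeasure M (C \<inter> VR D p n w' i) = ennreal (lam i))"
    then obtain c where c: "\<forall>i<n. w' i = w i + c"
      using uniqueness path_connected_imp_connected by blast
    then show "\<exists>c. \<forall>i<n. w' i = w i + c" by blast
    show "C \<inter> VR D p n w' i = C \<inter> VR D p n w i" if "i < n" for i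
      using VR_shift[OF c that, of D p] by simp
  qed
qed

end
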